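(* Let $\alpha_1,\alpha_2,\beta_1,\beta_2,\gamma\in\widehat{\mathbb{F}_q^\times}$ with $\gamma\notin\{\alpha_1\alpha_2,\beta_1\beta_2,\alpha_1\beta_2,\alpha_2\beta_1,\alpha_1\alpha_2\beta_1\beta_2\}$ and $\varepsilon\notin\{\alpha_1,\alpha_2,\beta_1,\beta_2\}$. Then for $\lambda\in\mathbb{F}_q$, $\lambda\neq1$, $$\alpha_1\alpha_2\beta_1\overline{\gamma}(1-\lambda)\,F_3\!\left({\alpha_1,\alpha_2;\beta_1,\beta_2\atop\gamma};\lambda,\frac{\lambda}{\lambda-1}\right)=F_3\!\left({\overline{\alpha_2\beta_1}\gamma,\alpha_1\alpha_2\beta_1\beta_2\overline{\gamma};\overline{\alpha_1\alpha_2}\gamma,\alpha_2\atop\gamma};\lambda,\frac{\lambda}{\lambda-1}\right).$$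
   Context: $\mathbb{F}_q$ is a finite field with $q$ elements. $\widehat{\mathbb{F}_q^\times}$ is the group of multiplicative characters $\mathbb{F}_q^\times\to\overline{\mathbb{Q}}^\times$, $\varepsilon$ the trivial character; every character (including $\varepsilon$) is extended by $0$ at $0$; $\overline{\eta}=\eta^{-1}$, $\overline{\eta_1\eta_2}=(\eta_1\eta_2)^{-1}$; $\delta(\eta)=1$ if $\eta=\varepsilon$, else $0$. $\psi$ is a fixed non-trivial additive character. $g(\eta)=-\sum_{x\in\mathbb{F}_q^\times}\psi(x)\eta(x)$, $g^\circ(\eta)=q^{\delta(\eta)}g(\eta)$, $(\alpha)_\nu=g(\alpha\nu)/g(\alpha)$, $(\alpha)^\circ_\nu=g^\circ(\alpha\nu)/g^\circ(\alpha)$. For $x,y\in\mathbb{F}_q$, $F_3\!\left({\alpha_1,\alpha_2;\beta_1,\beta_2\atop\gamma};x,y\right)=\frac{1}{(1-q)^2}\sum_{\nu_1,\nu_2\in\widehat{\mathbb{F}_q^\times}}\frac{(\alpha_1)_{\nu_1}(\alpha_2)_{\nu_2}(\beta_1)_{\nu_1}(\beta_2)_{\nu_2}}{(\gamma)^\circ_{\nu_1\nu_2}(\varepsilon)^\circ_{\nu_1}(\varepsilon)^\circ_{\nu_2}}\nu_1(x)\nu_2(y)$. *)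

theory Defs
  imports Complex_Main
begin

text \<open>Finite field: a type of class field and finite. Characters take values in complex
  numbers (containing the algebraic closure of the rationals).\<close>

definition mult_char :: "('a::{field,finite} \<Rightarrow> complex) \<Rightarrow> bool" where
  "mult_char \<chi> \<longleftrightarrow> \<chi> 0 = 0 \<and> (\<forall>x. x \<noteq> 0 \<longrightarrow> \<chi> x \<noteq> 0)
     \<and> (\<forall>x y. x \<noteq> 0 \<longrightarrow> y \<noteq> 0 \<longrightarrow> \<chi> (x * y) = \<chi> x * \<chi> y)"

definition chars :: "('a::{field,finite} \<Rightarrow> complex) set" where
  "chars = {\<chi>. mult_char \<chi>}"

definition triv_char :: "'a::{field,finite} \<Rightarrow> complex" ("\<epsilon>") where
  "\<epsilon> x = (if x = 0 then 0 else 1)"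

definition char_mult :: "('a::{field,finite} \<Rightarrow> complex) \<Rightarrow> ('a \<Rightarrow> complex) \<Rightarrow> 'a \<Rightarrow> complex" where
  "char_mult \<chi> \<eta> x = \<chi> x * \<eta> x"

definition char_inv :: "('a::{field,finite} \<Rightarrow> complex) \<Rightarrow> 'a \<Rightarrow> complex" where
  "char_inv \<chi> x = (if x = 0 then 0 else inverse (\<chi> x))"

definition add_char :: "('a::{field,finite} \<Rightarrow> complex) \<Rightarrow> bool" where
  "add_char \<psi> \<longleftrightarrow> (\<forall>x y. \<psi> (x + y) = \<psi> x * \<psi> y) \<and> (\<forall>x. \<psi> x \<noteq> 0)"

definition nontriv_add_char :: "('a::{field,finite} \<Rightarrow> complex) \<Rightarrow> bool" where
  "nontriv_add_char \<psi> \<longleftrightarrow> add_char \<psi> \<and> (\<exists>x. \<psi> x \<noteq> 1)"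

definition delta_char :: "('a::{field,finite} \<Rightarrow> complex) \<Rightarrow> nat" where
  "delta_char \<eta> = (if \<eta> = \<epsilon> then 1 else 0)"

definition gauss :: "('a::{field,finite} \<Rightarrow> complex) \<Rightarrow> ('a \<Rightarrow> complex) \<Rightarrow> complex" where
  "gauss \<psi> \<eta> = - (\<Sum>x\<in>UNIV - {0}. \<psi> x * \<eta> x)"

definition gauss0 :: "('a::{field,finite} \<Rightarrow> complex) \<Rightarrow> ('a \<Rightarrow> complex) \<Rightarrow> complex" where
  "gauss0 \<psi> \<eta> = of_nat (card (UNIV :: 'a set)) ^ delta_char \<eta> * gauss \<psi> \<eta>"

definition poch :: "('a::{field,finite} \<Rightarrow> complex) \<Rightarrow> ('a \<Rightarrow> complex) \<Rightarrow> ('a \<Rightarrow> complex) \<Rightarrow> complex" where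
  "poch \<psi> \<alpha> \<nu> = gauss \<psi> (char_mult \<alpha> \<nu>) / gauss \<psi> \<alpha>"

definition poch0 :: "('a::{field,finite} \<Rightarrow> complex) \<Rightarrow> ('a \<Rightarrow> complex) \<Rightarrow> ('a \<Rightarrow> complex) \<Rightarrow> complex" where
  "poch0 \<psi> \<alpha> \<nu> = gauss0 \<psi> (char_mult \<alpha> \<nu>) / gauss0 \<psi> \<alpha>"

definition F3 :: "('a::{field,finite} \<Rightarrow> complex) \<Rightarrow> ('a \<Rightarrow> complex) \<Rightarrow> ('a \<Rightarrow> complex)
    \<Rightarrow> ('a \<Rightarrow> complex) \<Rightarrow> ('a \<Rightarrow> complex) \<Rightarrow> ('a \<Rightarrow> complex) \<Rightarrow> 'a \<Rightarrow> 'a \<Rightarrow> complex" where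
  "F3 \<psi> a1 a2 b1 b2 c x y =
     1 / (1 - of_nat (card (UNIV :: 'a set)))^2 *
     (\<Sum>\<nu>1\<in>chars. \<Sum>\<nu>2\<in>chars.
        poch \<psi> a1 \<nu>1 * poch \<psi> a2 \<nu>2 * poch \<psi> b1 \<nu>1 * poch \<psi> b2 \<nu>2
        / (poch0 \<psi> c (char_mult \<nu>1 \<nu>2) * poch0 \<psi> \<epsilon> \<nu>1 * poch0 \<psi> \<epsilon> \<nu>2)
        * \<nu>1 x * \<nu>2 y)"

end

theory Submission
  imports Defs "HOL-Algebra.Multiplicative_Group" "HOL-Algebra.Algebraic_Closure_Type"
    "HOL-Analysis.Complex_Transcendental"
begin

(*
  For x, y \<noteq> 0 and nontrivial \<alpha>1, \<alpha>2, \<beta>1 \<beta>2 / \<gamma>, writing the Pochhammer symbols as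
  Gauss sums and collapsing the character sums by orthogonality gives an Euler-type
  representation

    F3(\<alpha>1, \<alpha>2; \<beta>1, \<beta>2; \<gamma>; x, y) = C * \<Sum>u,v \<beta>1(u) \<beta>2(v) \<kappa>\<inverse>(1 + u + v) \<alpha>1\<inverse>(1 + u x) \<alpha>2\<inverse>(1 + v y),

  with \<kappa> = \<beta>1 \<beta>2 / \<gamma> and C = \<gamma>(-1) g\<degree>(\<gamma>) g(\<kappa>) / (q g(\<beta>1) g(\<beta>2)).  Apply it to both sides
  of the identity, after exchanging \<alpha>2 and \<beta>2 on the left and \<alpha>1 and \<beta>1 on the right.
  For y = x / (x - 1) the involution u \<mapsto> -(1 + u + v) / (1 + u x) turns one double sum
  into the other, up to the factor \<alpha>2(-1) \<gamma>(-1) (\<alpha>1 \<alpha>2 \<beta>1 / \<gamma>)(1 - x), and the reflection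
  formula g(\<chi>) g(\<chi>\<inverse>) = \<chi>(-1) q matches the constants.
*)

section \<open>Finite fields\<close>

lemma card_field_ge_2: "CARD('a::{field,finite}) \<ge> 2"
proof -
  have "card {0, 1::'a} \<le> CARD('a)" by (rule card_mono) simp_all
  thus ?thesis by simp
qed

lemma pow_ring_of_type_algebra:
  "x [^]\<^bsub>ring_of_type_algebra\<^esub> (n::nat) = (x::'a::field) ^ n"
  by (induction n) (auto simp: ring_of_type_algebra_def)

lemma finite_field_power_card_minus_1:
  fixes x :: "'a::{field,finite}"
  assumes "x \<noteq> 0"
  shows "x ^ (CARD('a) - 1) = 1"
proof -
  have "x ^ (CARD('a) - 1) * (\<Prod>y\<in>UNIV - {0}. y) = (\<Prod>y\<in>UNIV - {0}. x * y)"
    by (simp add: prod.distrib card_Diff_singleton)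
  also have "\<dots> = (\<Prod>y\<in>UNIV - {0}. y)"
    by (rule prod.reindex_bij_witness[of _ "\<lambda>y. y / x" "\<lambda>y. x * y"]) (use assms in auto)
  finally show ?thesis by simp
qed

lemma finite_field_generator:
  "\<exists>a::'a::{field,finite}. a \<noteq> 0 \<and> (\<forall>x. x \<noteq> 0 \<longrightarrow> (\<exists>i. x = a ^ i))"
proof -
  let ?R = "ring_of_type_algebra :: 'a ring"
  interpret field ?R by (rule field_from_type_algebra)
  let ?G = "Multiplicative_Group.mult_of ?R"
  obtain a where a: "a \<in> carrier ?G" "carrier ?G = {a [^]\<^bsub>?R\<^esub> i | i::nat. i \<in> UNIV}"
    using finite_field_mult_group_has_gen by (auto simp: ring_of_type_algebra_def)
  have "\<exists>i. x = a ^ i" if "x \<noteq> 0" for x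
  proof -
    have "x \<in> carrier ?G" using that by (simp add: ring_of_type_algebra_def)
    thus ?thesis using a(2) by (auto simp: pow_ring_of_type_algebra)
  qed
  moreover have "a \<noteq> 0" using a(1) by (simp add: ring_of_type_algebra_def)
  ultimately show ?thesis by blast
qed

lemma finite_field_power_mod:
  fixes a :: "'a::{field,finite}"
  assumes "a \<noteq> 0"
  shows "a ^ k = a ^ (k mod (CARD('a) - 1))"
proof -
  define n where "n = CARD('a) - 1"
  have "a ^ k = (a ^ n) ^ (k div n) * a ^ (k mod n)"
    by (metis div_mult_mod_eq mult.commute power_add power_mult)
  thus ?thesis using finite_field_power_card_minus_1[OF assms] by (simp add: n_def)
qed

lemma generator_power_eq_iff:
  fixes a :: "'a::{field,finite}"
  assumes a: "a \<noteq> 0" "\<forall>x. x \<noteq> 0 \<longrightarrow> (\<exists>i. x = a ^ i)"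
  shows "a ^ i = a ^ j \<longleftrightarrow> i mod (CARD('a) - 1) = j mod (CARD('a) - 1)"
proof
  define n where "n = CARD('a) - 1"
  have n: "n > 0" using card_field_ge_2[where 'a='a] by (simp add: n_def)
  have pow_mod: "a ^ k = a ^ (k mod n)" for k
    unfolding n_def by (rule finite_field_power_mod[OF a(1)])
  have "(\<lambda>k. a ^ k) ` {..<n} = UNIV - {0}"
  proof
    show "UNIV - {0} \<subseteq> (\<lambda>k. a ^ k) ` {..<n}"
    proof
      fix x assume "x \<in> UNIV - {0::'a}"
      then obtain i where "x = a ^ (i mod n)" using a(2) pow_mod by auto
      thus "x \<in> (\<lambda>k. a ^ k) ` {..<n}" using n by auto
    qed
  qed (use a(1) in auto)
  moreover have "card (UNIV - {0::'a}) = n"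
    by (simp add: card_Diff_singleton n_def)
  ultimately have inj: "inj_on (\<lambda>k. a ^ k) {..<n}"
    by (simp add: inj_on_iff_eq_card)
  assume "a ^ i = a ^ j"
  hence "a ^ (i mod n) = a ^ (j mod n)" using pow_mod by metis
  thus "i mod n = j mod n" using inj_onD[OF inj] n by simp
next
  assume "i mod (CARD('a) - 1) = j mod (CARD('a) - 1)"
  thus "a ^ i = a ^ j" using finite_field_power_mod[OF a(1)] by metis
qed

section \<open>Multiplicative characters\<close>

lemma chars_zero: "\<omega> \<in> chars \<Longrightarrow> \<omega> 0 = 0"
  by (simp add: chars_def mult_char_def)

lemma chars_eq_0_iff: "\<omega> \<in> chars \<Longrightarrow> \<omega> x = 0 \<longleftrightarrow> x = 0"
  by (cases "x = 0") (simp_all add: chars_def mult_char_def)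

lemma chars_mult: "\<omega> \<in> chars \<Longrightarrow> \<omega> (x * y) = \<omega> x * \<omega> y"
  unfolding chars_def mult_char_def by (cases "x = 0"; cases "y = 0") simp_all

lemma chars_one:
  assumes "\<omega> \<in> chars" shows "\<omega> 1 = 1"
proof -
  have "\<omega> 1 * \<omega> 1 = \<omega> 1 * 1" using chars_mult[OF assms, of 1 1] by simp
  moreover have "\<omega> 1 \<noteq> 0" using chars_eq_0_iff[OF assms, of 1] by simp
  ultimately show ?thesis by simp
qed

lemma chars_inverse:
  assumes "\<omega> \<in> chars" shows "\<omega> (inverse x) = inverse (\<omega> x)"
proof (cases "x = 0")
  case False
  hence "\<omega> (inverse x) * \<omega> x = 1" using assms by (simp add: chars_one flip: chars_mult)
  thus ?thesis by (metis inverse_unique mult.commute)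
qed (use assms in \<open>simp add: chars_zero\<close>)

lemma chars_divide: "\<omega> \<in> chars \<Longrightarrow> \<omega> (x / y) = \<omega> x / \<omega> y"
  by (simp add: divide_inverse chars_mult chars_inverse)

lemma chars_power: "\<omega> \<in> chars \<Longrightarrow> \<omega> (x ^ k) = \<omega> x ^ k"
  by (induction k) (simp_all add: chars_mult chars_one)

lemma chars_minus_one_square: "\<omega> \<in> chars \<Longrightarrow> \<omega> (-1) * \<omega> (-1) = 1"
  by (simp add: chars_one flip: chars_mult)

lemma inverse_chars_minus_one: "\<omega> \<in> chars \<Longrightarrow> inverse (\<omega> (-1)) = \<omega> (-1)"
  by (metis chars_minus_one_square inverse_unique)

lemma chars_minus_one_cases:
  assumes "\<omega> \<in> chars" shows "\<omega> (-1) = 1 \<or> \<omega> (-1) = -1"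
proof -
  have "(\<omega> (-1) - 1) * (\<omega> (-1) + 1) = 0"
    using chars_minus_one_square[OF assms] by (simp add: algebra_simps)
  thus ?thesis by (auto simp: eq_neg_iff_add_eq_0)
qed

lemma triv_char_in_chars [simp]: "\<epsilon> \<in> chars"
  by (simp add: chars_def mult_char_def triv_char_def)

lemma char_mult_in_chars [simp]: "\<omega> \<in> chars \<Longrightarrow> \<eta> \<in> chars \<Longrightarrow> char_mult \<omega> \<eta> \<in> chars"
  by (simp add: chars_def mult_char_def char_mult_def)

lemma char_inv_in_chars [simp]: "\<omega> \<in> chars \<Longrightarrow> char_inv \<omega> \<in> chars"
  by (simp add: chars_def mult_char_def char_inv_def)

lemma char_mult_apply: "char_mult \<omega> \<eta> x = \<omega> x * \<eta> x"
  by (simp add: char_mult_def)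

lemma char_inv_apply: "\<omega> \<in> chars \<Longrightarrow> char_inv \<omega> x = inverse (\<omega> x)"
  by (simp add: char_inv_def chars_zero)

lemma chars_eqI:
  assumes "\<omega> \<in> chars" "\<eta> \<in> chars" "\<And>x. x \<noteq> 0 \<Longrightarrow> \<omega> x = \<eta> x"
  shows "\<omega> = \<eta>"
proof
  fix x show "\<omega> x = \<eta> x" using assms by (cases "x = 0") (simp_all add: chars_zero)
qed

lemma char_mult_commute: "char_mult \<omega> \<eta> = char_mult \<eta> \<omega>"
  by (simp add: fun_eq_iff char_mult_def mult.commute)

lemma char_mult_assoc: "char_mult (char_mult \<omega> \<eta>) \<theta> = char_mult \<omega> (char_mult \<eta> \<theta>)"
  by (simp add: fun_eq_iff char_mult_def mult.assoc)

lemma char_mult_triv_left: "\<omega> \<in> chars \<Longrightarrow> char_mult \<epsilon> \<omega> = \<omega>"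
  by (rule chars_eqI) (simp_all add: char_mult_apply triv_char_def)

lemma char_mult_inv_left: "\<omega> \<in> chars \<Longrightarrow> char_mult (char_inv \<omega>) \<omega> = \<epsilon>"
  by (rule chars_eqI) (simp_all add: char_mult_apply char_inv_apply triv_char_def chars_eq_0_iff)

lemma char_mult_inv_right: "\<omega> \<in> chars \<Longrightarrow> char_mult \<omega> (char_inv \<omega>) = \<epsilon>"
  by (metis char_mult_commute char_mult_inv_left)

lemma char_inv_triv: "char_inv \<epsilon> = \<epsilon>"
  by (simp add: fun_eq_iff char_inv_def triv_char_def)

lemma char_inv_char_inv: "\<omega> \<in> chars \<Longrightarrow> char_inv (char_inv \<omega>) = \<omega>"
  by (rule chars_eqI) (simp_all add: char_inv_apply)

lemma char_inv_eq_triv_iff: "\<omega> \<in> chars \<Longrightarrow> char_inv \<omega> = \<epsilon> \<longleftrightarrow> \<omega> = \<epsilon>"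
  by (metis char_inv_char_inv char_inv_triv)

lemma char_mult_inv_eq_triv_iff:
  assumes "\<omega> \<in> chars" "\<eta> \<in> chars"
  shows "char_mult \<omega> (char_inv \<eta>) = \<epsilon> \<longleftrightarrow> \<omega> = \<eta>"
proof
  assume triv: "char_mult \<omega> (char_inv \<eta>) = \<epsilon>"
  show "\<omega> = \<eta>"
  proof (rule chars_eqI[OF assms])
    fix x :: 'a assume x: "x \<noteq> 0"
    have "\<omega> x * inverse (\<eta> x) = 1"
      using fun_cong[OF triv, of x] x assms(2) by (simp add: char_mult_apply char_inv_apply triv_char_def)
    moreover have "\<eta> x \<noteq> 0" using x assms(2) by (simp add: chars_eq_0_iff)
    ultimately show "\<omega> x = \<eta> x" by (simp add: field_simps)
  qed
next
  assume "\<omega> = \<eta>"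
  thus "char_mult \<omega> (char_inv \<eta>) = \<epsilon>"
    using assms by (simp add: char_mult_inv_right)
qed

lemma sum_char:
  fixes \<omega> :: "'a::{field,finite} \<Rightarrow> complex"
  assumes "\<omega> \<in> chars"
  shows "(\<Sum>x\<in>UNIV - {0}. \<omega> x) = (if \<omega> = \<epsilon> then of_nat (CARD('a) - 1) else 0)"
proof (cases "\<omega> = \<epsilon>")
  case True
  thus ?thesis by (simp add: triv_char_def card_Diff_singleton)
next
  case False
  have "\<exists>x0. x0 \<noteq> 0 \<and> \<omega> x0 \<noteq> 1"
  proof (rule ccontr)
    assume "\<nexists>x0. x0 \<noteq> 0 \<and> \<omega> x0 \<noteq> 1"
    hence "\<omega> = \<epsilon>" using assms by (intro chars_eqI) (auto simp: triv_char_def)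
    thus False using False by contradiction
  qed
  then obtain x0 where x0: "x0 \<noteq> 0" "\<omega> x0 \<noteq> 1" by blast
  have "(\<Sum>x\<in>UNIV - {0}. \<omega> x) = (\<Sum>x\<in>UNIV - {0}. \<omega> (x0 * x))"
    by (rule sum.reindex_bij_witness[of _ "\<lambda>x. x0 * x" "\<lambda>y. y / x0"]) (use x0 in auto)
  also have "\<dots> = \<omega> x0 * (\<Sum>x\<in>UNIV - {0}. \<omega> x)"
    by (simp add: chars_mult[OF assms] sum_distrib_left)
  finally show ?thesis using x0 False by simp
qed

lemma finite_chars: "finite (chars :: ('a::{field,finite} \<Rightarrow> complex) set)"
proof -
  define R where "R = insert 0 {z::complex. z ^ (CARD('a) - 1) = 1}"
  have "finite R"
    using card_field_ge_2[where 'a='a] by (simp add: R_def finite_roots_unity)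
  moreover have "chars \<subseteq> Pi\<^sub>E (UNIV::'a set) (\<lambda>_. R)"
  proof
    fix \<omega> :: "'a \<Rightarrow> complex" assume \<omega>: "\<omega> \<in> chars"
    have "\<omega> x \<in> R" for x
      using finite_field_power_card_minus_1[of x]
      by (cases "x = 0")
         (simp_all add: R_def chars_zero[OF \<omega>] chars_one[OF \<omega>] flip: chars_power[OF \<omega>])
    thus "\<omega> \<in> Pi\<^sub>E UNIV (\<lambda>_. R)" by (simp add: PiE_UNIV_domain)
  qed
  ultimately show ?thesis by (meson finite_PiE finite_subset finite)
qed

lemma exists_char_neq_1:
  fixes b :: "'a::{field,finite}"
  assumes "b \<noteq> 0" "b \<noteq> 1"
  shows "\<exists>\<omega>\<in>chars. \<omega> b \<noteq> 1"
proof -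
  obtain a :: 'a where a: "a \<noteq> 0" "\<forall>x. x \<noteq> 0 \<longrightarrow> (\<exists>i. x = a ^ i)"
    using finite_field_generator by blast
  define n where "n = CARD('a) - 1"
  have n: "1 \<le> n" using card_field_ge_2[where 'a='a] by (simp add: n_def)
  define root where "root j = exp (2 * of_real pi * \<i> * of_nat j / of_nat n)" for j :: nat
  have root_eq_iff: "root i = root j \<longleftrightarrow> i mod n = j mod n" for i j
    unfolding root_def by (rule complex_root_unity_eq[OF n])
  have root_add: "root (i + j) = root i * root j" for i j
    unfolding root_def by (simp add: add_divide_distrib distrib_left exp_add)
  define dlog where "dlog x = (SOME i. x = a ^ i)" for x
  have a_dlog: "a ^ dlog x = x" if "x \<noteq> 0" for x
    unfolding dlog_def using a(2) that by (metis (mono_tags) someI_ex)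
  have a_pow_eq_iff: "a ^ i = a ^ j \<longleftrightarrow> i mod n = j mod n" for i j
    unfolding n_def by (rule generator_power_eq_iff[OF a])
  define \<omega> where "\<omega> x = (if x = 0 then 0 else root (dlog x))" for x
  have "mult_char \<omega>"
    unfolding mult_char_def
  proof (intro conjI allI impI)
    fix x y :: 'a assume xy: "x \<noteq> 0" "y \<noteq> 0"
    have "a ^ dlog (x * y) = a ^ (dlog x + dlog y)"
      using xy by (simp add: a_dlog power_add)
    hence "root (dlog (x * y)) = root (dlog x + dlog y)"
      by (simp only: a_pow_eq_iff root_eq_iff)
    thus "\<omega> (x * y) = \<omega> x * \<omega> y" using xy by (simp add: \<omega>_def root_add)
  qed (simp_all add: \<omega>_def root_def)
  moreover have "\<omega> b \<noteq> 1"
  proof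
    assume "\<omega> b = 1"
    hence "root (dlog b) = root 0" using assms by (simp add: \<omega>_def root_def)
    hence "a ^ dlog b = a ^ 0" by (simp only: a_pow_eq_iff root_eq_iff)
    thus False using a_dlog assms by simp
  qed
  ultimately show ?thesis by (auto simp: chars_def)
qed

lemma sum_chars_reindex:
  assumes "\<eta> \<in> chars"
  shows "(\<Sum>\<omega>\<in>chars. f (char_mult \<eta> \<omega>)) = (\<Sum>\<omega>\<in>chars. f \<omega>)"
proof (rule sum.reindex_bij_witness[of _ "char_mult (char_inv \<eta>)" "char_mult \<eta>"])
  fix \<omega> assume "\<omega> \<in> (chars :: ('a \<Rightarrow> complex) set)"
  with assms show "char_mult (char_inv \<eta>) (char_mult \<eta> \<omega>) = \<omega>"
    and "char_mult \<eta> (char_mult (char_inv \<eta>) \<omega>) = \<omega>"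
    by (simp_all flip: char_mult_assoc add: char_mult_inv_left char_mult_inv_right
        char_mult_triv_left)
qed (use assms in simp_all)

lemma sum_chars_apply_eq_0:
  fixes b :: "'a::{field,finite}"
  assumes "b \<noteq> 0" "b \<noteq> 1"
  shows "(\<Sum>\<omega>\<in>chars. \<omega> b) = 0"
proof -
  obtain \<eta> where \<eta>: "\<eta> \<in> chars" "\<eta> b \<noteq> 1" using exists_char_neq_1[OF assms] by blast
  have "(\<Sum>\<omega>\<in>chars. \<omega> b) = (\<Sum>\<omega>\<in>chars. char_mult \<eta> \<omega> b)"
    using sum_chars_reindex[OF \<eta>(1), of "\<lambda>\<omega>. \<omega> b"] by simp
  also have "\<dots> = \<eta> b * (\<Sum>\<omega>\<in>chars. \<omega> b)"
    by (simp add: char_mult_apply sum_distrib_left)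
  finally show ?thesis using \<eta>(2) by simp
qed

lemma card_chars: "card (chars :: ('a::{field,finite} \<Rightarrow> complex) set) = CARD('a) - 1"
proof -
  let ?C = "chars :: ('a \<Rightarrow> complex) set"
  have "(of_nat (card ?C) :: complex) = (\<Sum>x\<in>UNIV - {0::'a}. if x = 1 then of_nat (card ?C) else 0)"
    by (simp add: sum.delta)
  also have "\<dots> = (\<Sum>x\<in>UNIV - {0::'a}. \<Sum>\<omega>\<in>?C. \<omega> x)"
    by (rule sum.cong) (auto simp: sum_chars_apply_eq_0 chars_one cong: sum.cong_simp)
  also have "\<dots> = (\<Sum>\<omega>\<in>?C. \<Sum>x\<in>UNIV - {0}. \<omega> x)"
    by (rule sum.swap)
  also have "\<dots> = (\<Sum>\<omega>\<in>?C. if \<omega> = \<epsilon> then of_nat (CARD('a) - 1) else 0)"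
    by (rule sum.cong) (simp_all add: sum_char)
  also have "\<dots> = of_nat (CARD('a) - 1)"
    by (simp add: sum.delta[OF finite_chars])
  finally show ?thesis by (simp only: of_nat_eq_iff)
qed

lemma sum_chars_apply:
  fixes b :: "'a::{field,finite}"
  shows "(\<Sum>\<omega>\<in>chars. \<omega> b) = (if b = 1 then of_nat (CARD('a) - 1) else 0)"
  by (cases "b = 0") (auto simp: card_chars sum_chars_apply_eq_0 chars_zero chars_one cong: sum.cong_simp)

lemma char_mult_inv_mult_inv_cancel:
  assumes "B1 \<in> chars" "B2 \<in> chars" "G \<in> chars"
  shows "char_mult (char_mult (char_inv (char_mult (char_mult B1 B2) (char_inv G))) B2) (char_inv G)
       = char_inv B1"
  using assms
  by (intro chars_eqI) (simp_all add: char_mult_apply char_inv_apply chars_eq_0_iff field_simps)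

lemma sum_chars_mult_sums:
  fixes z :: "'a::{field,finite}"
  assumes "z \<noteq> 0" "finite I" "\<And>i. i \<in> I \<Longrightarrow> e i \<noteq> 0"
  shows "(\<Sum>\<nu>\<in>chars. (\<Sum>i\<in>I. f i * \<nu> (e i)) * (\<Sum>c\<in>UNIV - {0}. g c * \<nu> (z / c)))
       = of_nat (CARD('a) - 1) * (\<Sum>i\<in>I. f i * g (e i * z))"
proof -
  let ?U = "UNIV - {0::'a}"
  have "(\<Sum>\<nu>\<in>chars. (\<Sum>i\<in>I. f i * \<nu> (e i)) * (\<Sum>c\<in>?U. g c * \<nu> (z / c)))
      = (\<Sum>\<nu>\<in>chars. \<Sum>i\<in>I. \<Sum>c\<in>?U. f i * g c * (\<nu> (e i) * \<nu> (z / c)))"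
    by (simp add: sum_product mult_ac)
  also have "\<dots> = (\<Sum>\<nu>\<in>chars. \<Sum>i\<in>I. \<Sum>c\<in>?U. f i * g c * \<nu> (e i * z / c))"
    by (intro sum.cong refl) (simp add: chars_mult[symmetric])
  also have "\<dots> = (\<Sum>i\<in>I. \<Sum>c\<in>?U. \<Sum>\<nu>\<in>chars. f i * g c * \<nu> (e i * z / c))"
    by (subst sum.swap) (intro sum.cong refl, rule sum.swap)
  also have "\<dots> = (\<Sum>i\<in>I. \<Sum>c\<in>?U. if c = e i * z then of_nat (CARD('a) - 1) * (f i * g c) else 0)"
  proof (intro sum.cong refl)
    fix i c assume "c \<in> ?U"
    hence "e i * z / c = 1 \<longleftrightarrow> c = e i * z" by (auto simp: field_simps)
    thus "(\<Sum>\<nu>\<in>chars. f i * g c * \<nu> (e i * z / c))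
        = (if c = e i * z then of_nat (CARD('a) - 1) * (f i * g c) else 0)"
      by (simp add: sum_chars_apply flip: sum_distrib_left)
  qed
  also have "\<dots> = (\<Sum>i\<in>I. of_nat (CARD('a) - 1) * (f i * g (e i * z)))"
    using assms by (intro sum.cong refl) (simp add: sum.delta)
  finally show ?thesis by (simp add: sum_distrib_left)
qed

section \<open>Gauss sums\<close>

definition gauss_triple ::
    "('a::{field,finite} \<Rightarrow> complex) \<Rightarrow> ('a \<Rightarrow> complex) \<Rightarrow> ('a \<Rightarrow> complex) \<Rightarrow> ('a \<Rightarrow> complex) \<Rightarrow> complex"
  where "gauss_triple \<psi> A B \<nu> =
    gauss \<psi> (char_mult A \<nu>) * gauss \<psi> (char_mult B \<nu>) * gauss \<psi> (char_inv \<nu>)"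

context
  fixes \<psi> :: "'a::{field,finite} \<Rightarrow> complex"
  assumes \<psi>: "nontriv_add_char \<psi>"
begin

lemma add_char_add: "\<psi> (x + y) = \<psi> x * \<psi> y"
  using \<psi> by (simp add: nontriv_add_char_def add_char_def)

lemma add_char_zero: "\<psi> 0 = 1"
proof -
  have "\<psi> 0 * \<psi> 0 = \<psi> 0 * 1" using add_char_add[of 0 0] by simp
  moreover have "\<psi> 0 \<noteq> 0" using \<psi> by (simp add: nontriv_add_char_def add_char_def)
  ultimately show ?thesis by simp
qed

lemma sum_add_char: "(\<Sum>x\<in>UNIV. \<psi> x) = 0"
proof -
  obtain x0 where x0: "\<psi> x0 \<noteq> 1" using \<psi> by (auto simp: nontriv_add_char_def)
  have "(\<Sum>x\<in>UNIV. \<psi> x) = (\<Sum>x\<in>UNIV. \<psi> (x0 + x))"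
    by (rule sum.reindex_bij_witness[of _ "\<lambda>x. x0 + x" "\<lambda>y. y - x0"]) auto
  also have "\<dots> = \<psi> x0 * (\<Sum>x\<in>UNIV. \<psi> x)"
    by (simp add: add_char_add sum_distrib_left)
  finally show ?thesis using x0 by simp
qed

lemma sum_add_char_scaled:
  "(\<Sum>x\<in>UNIV - {0}. \<psi> (c * x)) = (if c = 0 then of_nat CARD('a) - 1 else - 1)"
proof -
  have "(\<Sum>x\<in>UNIV. \<psi> (c * x)) = (if c = 0 then of_nat CARD('a) else 0)"
  proof (cases "c = 0")
    case False
    have "(\<Sum>x\<in>UNIV. \<psi> (c * x)) = (\<Sum>x\<in>UNIV. \<psi> x)"
      by (rule sum.reindex_bij_witness[of _ "\<lambda>y. y / c" "\<lambda>x. c * x"]) (use False in auto)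
    thus ?thesis using False sum_add_char by simp
  qed (simp add: add_char_zero)
  thus ?thesis by (simp add: sum_diff1 add_char_zero)
qed

lemma gauss_triv: "gauss \<psi> \<epsilon> = 1"
  using sum_add_char_scaled[of 1] by (simp add: gauss_def triv_char_def)

lemma gauss0_triv: "gauss0 \<psi> \<epsilon> = of_nat CARD('a)"
  by (simp add: gauss0_def delta_char_def gauss_triv)

lemma gauss0_nontriv: "\<omega> \<noteq> \<epsilon> \<Longrightarrow> gauss0 \<psi> \<omega> = gauss \<psi> \<omega>"
  by (simp add: gauss0_def delta_char_def)

lemma sum_add_char_twisted:
  assumes "\<omega> \<in> chars" "\<omega> \<noteq> \<epsilon>"
  shows "(\<Sum>x\<in>UNIV - {0}. \<psi> (c * x) * \<omega> x) = - char_inv \<omega> c * gauss \<psi> \<omega>"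
proof (cases "c = 0")
  case True
  thus ?thesis using sum_char[OF assms(1)] assms(2) by (simp add: add_char_zero char_inv_def)
next
  case False
  have "(\<Sum>x\<in>UNIV - {0}. \<psi> x * \<omega> x) = (\<Sum>x\<in>UNIV - {0}. \<psi> (c * x) * \<omega> (c * x))"
    by (rule sum.reindex_bij_witness[of _ "\<lambda>x. c * x" "\<lambda>y. y / c"]) (use False in auto)
  also have "\<dots> = \<omega> c * (\<Sum>x\<in>UNIV - {0}. \<psi> (c * x) * \<omega> x)"
    by (simp add: chars_mult[OF assms(1)] sum_distrib_left mult_ac)
  finally show ?thesis
    using False assms(1) by (simp add: gauss_def char_inv_apply chars_eq_0_iff field_simps)
qed

(* Substituting x = y t in g(\<omega>) g(\<omega>\<inverse>) = \<Sum>x,y \<psi>(x + y) \<omega>(x / y) leaves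
   \<Sum>t \<omega>(t) \<Sum>y \<psi>((1 + t) y), whose inner sum only detects t = -1. *)
lemma gauss_mult_gauss_inv:
  assumes \<omega>: "\<omega> \<in> chars" "\<omega> \<noteq> \<epsilon>"
  shows "gauss \<psi> \<omega> * gauss \<psi> (char_inv \<omega>) = \<omega> (-1) * of_nat CARD('a)"
proof -
  let ?U = "UNIV - {0::'a}"
  have inner: "\<psi> y * char_inv \<omega> y * (\<Sum>x\<in>?U. \<psi> x * \<omega> x) = (\<Sum>t\<in>?U. \<psi> ((1 + t) * y) * \<omega> t)"
    if y: "y \<noteq> 0" for y
  proof -
    have "(\<Sum>x\<in>?U. \<psi> x * \<omega> x) = (\<Sum>t\<in>?U. \<psi> (y * t) * \<omega> (y * t))"
      by (rule sum.reindex_bij_witness[of _ "\<lambda>t. y * t" "\<lambda>x. x / y"]) (use y in auto)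
    hence "\<psi> y * char_inv \<omega> y * (\<Sum>x\<in>?U. \<psi> x * \<omega> x)
        = (\<Sum>t\<in>?U. \<psi> y * char_inv \<omega> y * (\<psi> (y * t) * \<omega> (y * t)))"
      by (simp add: sum_distrib_left)
    also have "\<dots> = (\<Sum>t\<in>?U. \<psi> ((1 + t) * y) * \<omega> t)"
      using y \<omega>(1) chars_eq_0_iff[OF \<omega>(1), of y]
      by (intro sum.cong refl) (simp add: chars_mult char_inv_apply distrib_right add_char_add
          field_simps)
    finally show ?thesis .
  qed
  have "gauss \<psi> \<omega> * gauss \<psi> (char_inv \<omega>) = (\<Sum>y\<in>?U. \<psi> y * char_inv \<omega> y) * (\<Sum>x\<in>?U. \<psi> x * \<omega> x)"
    unfolding gauss_def minus_mult_minus by (rule mult.commute)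
  also have "\<dots> = (\<Sum>y\<in>?U. \<psi> y * char_inv \<omega> y * (\<Sum>x\<in>?U. \<psi> x * \<omega> x))"
    by (rule sum_distrib_right)
  also have "\<dots> = (\<Sum>y\<in>?U. \<Sum>t\<in>?U. \<psi> ((1 + t) * y) * \<omega> t)"
    by (rule sum.cong) (simp_all add: inner)
  also have "\<dots> = (\<Sum>t\<in>?U. \<omega> t * (\<Sum>y\<in>?U. \<psi> ((1 + t) * y)))"
    by (subst sum.swap) (simp add: sum_distrib_left mult.commute)
  also have "\<dots> = (\<Sum>t\<in>?U. (if t = -1 then \<omega> t * of_nat CARD('a) else 0) - \<omega> t)"
  proof (rule sum.cong[OF refl])
    fix t :: 'a
    show "\<omega> t * (\<Sum>y\<in>?U. \<psi> ((1 + t) * y)) = (if t = -1 then \<omega> t * of_nat CARD('a) else 0) - \<omega> t"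
      by (cases "t = -1") (simp_all add: sum_add_char_scaled add_eq_0_iff right_diff_distrib add_char_zero)
  qed
  also have "\<dots> = \<omega> (-1) * of_nat CARD('a)"
    using sum_char[OF \<omega>(1)] \<omega>(2) by (simp add: sum_subtractf sum.delta)
  finally show ?thesis .
qed

lemma gauss_mult_gauss0_inv:
  assumes "\<omega> \<in> chars"
  shows "gauss \<psi> \<omega> * gauss0 \<psi> (char_inv \<omega>) = \<omega> (-1) * of_nat CARD('a)"
proof (cases "\<omega> = \<epsilon>")
  case True
  thus ?thesis by (simp add: char_inv_triv gauss_triv gauss0_triv triv_char_def)
next
  case False
  thus ?thesis
    using assms gauss_mult_gauss_inv by (simp add: gauss0_nontriv char_inv_eq_triv_iff)
qed

lemma gauss_nonzero: "\<omega> \<in> chars \<Longrightarrow> gauss \<psi> \<omega> \<noteq> 0"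
  using gauss_mult_gauss0_inv[of \<omega>] by (auto simp: chars_eq_0_iff)

lemma inverse_gauss0:
  assumes "\<omega> \<in> chars"
  shows "inverse (gauss0 \<psi> \<omega>) = \<omega> (-1) * gauss \<psi> (char_inv \<omega>) / of_nat CARD('a)"
proof -
  have "gauss0 \<psi> \<omega> * (\<omega> (-1) * gauss \<psi> (char_inv \<omega>) / of_nat CARD('a))
      = \<omega> (-1) * (gauss \<psi> (char_inv \<omega>) * gauss0 \<psi> \<omega>) / of_nat CARD('a)"
    by simp
  also have "gauss \<psi> (char_inv \<omega>) * gauss0 \<psi> \<omega> = \<omega> (-1) * of_nat CARD('a)"
    using gauss_mult_gauss0_inv[of "char_inv \<omega>"] assms
    by (simp add: char_inv_char_inv char_inv_apply inverse_chars_minus_one)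
  finally have "gauss0 \<psi> \<omega> * (\<omega> (-1) * gauss \<psi> (char_inv \<omega>) / of_nat CARD('a))
      = \<omega> (-1) * \<omega> (-1)"
    by simp
  thus ?thesis
    using chars_minus_one_square[OF assms] by (simp add: inverse_unique)
qed

lemma gauss_divide_gauss_reflect:
  assumes "\<omega> \<in> chars" "\<eta> \<in> chars" "\<omega> \<noteq> \<epsilon>" "\<eta> \<noteq> \<epsilon>"
  shows "gauss \<psi> \<omega> / gauss \<psi> \<eta> = \<omega> (-1) * \<eta> (-1) * gauss \<psi> (char_inv \<eta>) / gauss \<psi> (char_inv \<omega>)"
proof -
  have "\<omega> (-1) * \<eta> (-1) * (gauss \<psi> \<eta> * gauss \<psi> (char_inv \<eta>))
      = \<omega> (-1) * of_nat CARD('a) * (\<eta> (-1) * \<eta> (-1))"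
    by (simp add: gauss_mult_gauss_inv[OF assms(2,4)] mult_ac)
  also have "\<dots> = gauss \<psi> \<omega> * gauss \<psi> (char_inv \<omega>)"
    by (simp add: chars_minus_one_square[OF assms(2)] gauss_mult_gauss_inv[OF assms(1,3)])
  finally show ?thesis
    using gauss_nonzero assms by (simp add: frac_eq_eq mult_ac)
qed

lemma gauss_mult_gauss_twisted:
  assumes "\<nu> \<in> chars"
  shows "gauss \<psi> (char_mult A \<nu>) * gauss \<psi> (char_mult B \<nu>)
       = (\<Sum>(a, b)\<in>(UNIV - {0}) \<times> (UNIV - {0}). \<psi> a * A a * \<psi> b * B b * \<nu> (a * b))"
  by (simp add: gauss_def char_mult_apply sum_product sum.cartesian_product chars_mult[OF assms]
      mult_ac)

lemma gauss_inv_mult_apply: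
  assumes "\<nu> \<in> chars"
  shows "gauss \<psi> (char_inv \<nu>) * \<nu> z = (\<Sum>c\<in>UNIV - {0}. - \<psi> c * \<nu> (z / c))"
  by (simp add: gauss_def sum_distrib_left sum_distrib_right sum_negf char_inv_apply[OF assms]
      divide_inverse chars_mult[OF assms] chars_inverse[OF assms] mult_ac)

(* Opening the three Gauss sums, the sum over \<nu> collapses by orthogonality to a b z = c,
   and the remaining sum over a is a twisted Gauss sum of A. *)
lemma sum_chars_gauss_triple:
  assumes AB: "A \<in> chars" "B \<in> chars" and A: "A \<noteq> \<epsilon>" and z: "z \<noteq> 0"
  shows "(\<Sum>\<nu>\<in>chars. gauss_triple \<psi> A B \<nu> * \<nu> z)
       = of_nat (CARD('a) - 1) * gauss \<psi> A * (\<Sum>b\<in>UNIV - {0}. \<psi> b * B b * char_inv A (1 + b * z))"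
proof -
  let ?U = "UNIV - {0::'a}"
  have "(\<Sum>\<nu>\<in>chars. gauss_triple \<psi> A B \<nu> * \<nu> z)
      = (\<Sum>\<nu>\<in>chars. (\<Sum>(a, b)\<in>?U \<times> ?U. \<psi> a * A a * \<psi> b * B b * \<nu> (a * b))
                     * (\<Sum>c\<in>?U. - \<psi> c * \<nu> (z / c)))"
    by (intro sum.cong refl)
       (simp add: gauss_triple_def gauss_mult_gauss_twisted gauss_inv_mult_apply flip: mult.assoc)
  also have "\<dots> = of_nat (CARD('a) - 1) * (\<Sum>(a, b)\<in>?U \<times> ?U. \<psi> a * A a * \<psi> b * B b * - \<psi> (a * b * z))"
    using sum_chars_mult_sums[OF z, of "?U \<times> ?U" "\<lambda>(a, b). a * b"
        "\<lambda>(a, b). \<psi> a * A a * \<psi> b * B b" "\<lambda>c. - \<psi> c"]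
    by (simp add: case_prod_beta mem_Times_iff)
  also have "(\<Sum>(a, b)\<in>?U \<times> ?U. \<psi> a * A a * \<psi> b * B b * - \<psi> (a * b * z))
      = (\<Sum>b\<in>?U. - (\<psi> b * B b) * (\<Sum>a\<in>?U. \<psi> ((1 + b * z) * a) * A a))"
    by (subst sum.cartesian_product[symmetric], subst sum.swap)
       (simp add: sum_distrib_left distrib_left distrib_right add_char_add mult_ac)
  also have "\<dots> = (\<Sum>b\<in>?U. \<psi> b * B b * char_inv A (1 + b * z) * gauss \<psi> A)"
    by (simp add: sum_add_char_twisted[OF AB(1) A] mult.assoc)
  finally show ?thesis by (simp add: sum_distrib_left sum_distrib_right mult_ac)
qed

end

section \<open>An Euler-type representation of \<open>F3\<close>\<close>

(* Finite-field analogue of the Euler integrand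
     u^\<beta>1 v^\<beta>2 (1 - u - v)^(\<gamma> - \<beta>1 - \<beta>2) (1 - u x)^-\<alpha>1 (1 - v y)^-\<alpha>2
   of F3 (against du dv / (u v (1 - u - v))), after (u, v) \<mapsto> (-u, -v). *)
definition F3_euler_term :: "('a::{field,finite} \<Rightarrow> complex) \<Rightarrow> ('a \<Rightarrow> complex) \<Rightarrow> ('a \<Rightarrow> complex)
    \<Rightarrow> ('a \<Rightarrow> complex) \<Rightarrow> ('a \<Rightarrow> complex) \<Rightarrow> 'a \<Rightarrow> 'a \<Rightarrow> 'a \<Rightarrow> 'a \<Rightarrow> complex" where
  "F3_euler_term A1 A2 B1 B2 G x y u v =
     B1 u * B2 v * char_inv (char_mult (char_mult B1 B2) (char_inv G)) (1 + u + v)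
       * char_inv A1 (1 + u * x) * char_inv A2 (1 + v * y)"

definition F3_euler_sum :: "('a::{field,finite} \<Rightarrow> complex) \<Rightarrow> ('a \<Rightarrow> complex) \<Rightarrow> ('a \<Rightarrow> complex)
    \<Rightarrow> ('a \<Rightarrow> complex) \<Rightarrow> ('a \<Rightarrow> complex) \<Rightarrow> 'a \<Rightarrow> 'a \<Rightarrow> complex" where
  "F3_euler_sum A1 A2 B1 B2 G x y = (\<Sum>u\<in>UNIV. \<Sum>v\<in>UNIV. F3_euler_term A1 A2 B1 B2 G x y u v)"

definition F3_euler_const :: "('a::{field,finite} \<Rightarrow> complex) \<Rightarrow> ('a \<Rightarrow> complex) \<Rightarrow> ('a \<Rightarrow> complex)
    \<Rightarrow> ('a \<Rightarrow> complex) \<Rightarrow> complex" where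
  "F3_euler_const \<psi> B1 B2 G =
     G (-1) * gauss0 \<psi> G * gauss \<psi> (char_mult (char_mult B1 B2) (char_inv G))
       / (of_nat CARD('a) * gauss \<psi> B1 * gauss \<psi> B2)"

lemma F3_swap_a1_b1: "F3 \<psi> A1 A2 B1 B2 G x y = F3 \<psi> B1 A2 A1 B2 G x y"
  unfolding F3_def by (simp add: mult_ac)

lemma F3_swap_a2_b2: "F3 \<psi> A1 A2 B1 B2 G x y = F3 \<psi> A1 B2 B1 A2 G x y"
  unfolding F3_def by (simp add: mult_ac)

lemma F3_zero_left: "F3 \<psi> A1 A2 B1 B2 G 0 y = 0"
  unfolding F3_def by (simp add: chars_zero cong: sum.cong_simp)

context
  fixes \<psi> :: "'a::{field,finite} \<Rightarrow> complex"
  assumes \<psi>: "nontriv_add_char \<psi>"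
begin

lemma sum_chars_gauss_triple_scaled:
  assumes AB: "A \<in> chars" "B \<in> chars" and A: "A \<noteq> \<epsilon>" and x: "x \<noteq> 0" and s: "s \<noteq> 0"
  shows "(\<Sum>\<nu>\<in>chars. gauss_triple \<psi> A B \<nu> * \<nu> (x / s))
       = of_nat (CARD('a) - 1) * gauss \<psi> A * B s
         * (\<Sum>u\<in>UNIV - {0}. \<psi> (s * u) * B u * char_inv A (1 + u * x))"
proof -
  let ?U = "UNIV - {0::'a}"
  have "(\<Sum>\<nu>\<in>chars. gauss_triple \<psi> A B \<nu> * \<nu> (x / s))
      = of_nat (CARD('a) - 1) * gauss \<psi> A * (\<Sum>b\<in>?U. \<psi> b * B b * char_inv A (1 + b * (x / s)))"
    using x s by (intro sum_chars_gauss_triple[OF \<psi> AB A]) simp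
  also have "(\<Sum>b\<in>?U. \<psi> b * B b * char_inv A (1 + b * (x / s)))
      = (\<Sum>u\<in>?U. \<psi> (s * u) * B (s * u) * char_inv A (1 + s * u * (x / s)))"
    by (rule sum.reindex_bij_witness[of _ "\<lambda>u. s * u" "\<lambda>b. b / s"]) (use s in auto)
  also have "\<dots> = B s * (\<Sum>u\<in>?U. \<psi> (s * u) * B u * char_inv A (1 + u * x))"
    using s by (simp add: chars_mult[OF AB(2)] sum_distrib_left mult_ac)
  finally show ?thesis by (simp only: mult.assoc)
qed

lemma sum_chars2_gauss_conj:
  assumes "G \<in> chars"
  shows "(\<Sum>\<nu>1\<in>chars. \<Sum>\<nu>2\<in>chars.
            T1 \<nu>1 * T2 \<nu>2 * gauss \<psi> (char_inv (char_mult G (char_mult \<nu>1 \<nu>2))) * \<nu>1 x * \<nu>2 y)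
       = (\<Sum>s\<in>UNIV - {0}. - (\<psi> s * char_inv G s)
              * (\<Sum>\<nu>1\<in>chars. T1 \<nu>1 * \<nu>1 (x / s)) * (\<Sum>\<nu>2\<in>chars. T2 \<nu>2 * \<nu>2 (y / s)))"
proof -
  let ?U = "UNIV - {0::'a}"
  have "T1 \<nu>1 * T2 \<nu>2 * gauss \<psi> (char_inv (char_mult G (char_mult \<nu>1 \<nu>2))) * \<nu>1 x * \<nu>2 y
      = (\<Sum>s\<in>?U. - (\<psi> s * char_inv G s) * (T1 \<nu>1 * \<nu>1 (x / s)) * (T2 \<nu>2 * \<nu>2 (y / s)))"
    if "\<nu>1 \<in> chars" "\<nu>2 \<in> chars" for \<nu>1 \<nu>2
  proof -
    have "T1 \<nu>1 * T2 \<nu>2 * gauss \<psi> (char_inv (char_mult G (char_mult \<nu>1 \<nu>2))) * \<nu>1 x * \<nu>2 y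
        = (\<Sum>s\<in>?U. - (T1 \<nu>1 * T2 \<nu>2 * \<nu>1 x * \<nu>2 y)
                      * (\<psi> s * char_inv (char_mult G (char_mult \<nu>1 \<nu>2)) s))"
      by (simp add: gauss_def sum_distrib_left sum_negf mult_ac)
    also have "\<dots> = (\<Sum>s\<in>?U. - (\<psi> s * char_inv G s) * (T1 \<nu>1 * \<nu>1 (x / s)) * (T2 \<nu>2 * \<nu>2 (y / s)))"
      using that assms
      by (intro sum.cong refl)
         (simp only: char_inv_apply char_mult_apply chars_divide char_mult_in_chars,
          simp add: divide_inverse inverse_mult_distrib mult_ac)
    finally show ?thesis .
  qed
  hence "(\<Sum>\<nu>1\<in>chars. \<Sum>\<nu>2\<in>chars.
            T1 \<nu>1 * T2 \<nu>2 * gauss \<psi> (char_inv (char_mult G (char_mult \<nu>1 \<nu>2))) * \<nu>1 x * \<nu>2 y)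
      = (\<Sum>\<nu>1\<in>chars. \<Sum>\<nu>2\<in>chars. \<Sum>s\<in>?U.
            - (\<psi> s * char_inv G s) * (T1 \<nu>1 * \<nu>1 (x / s)) * (T2 \<nu>2 * \<nu>2 (y / s)))"
    by (intro sum.cong refl) simp
  also have "\<dots> = (\<Sum>s\<in>?U. \<Sum>\<nu>1\<in>chars. \<Sum>\<nu>2\<in>chars.
            - (\<psi> s * char_inv G s) * (T1 \<nu>1 * \<nu>1 (x / s)) * (T2 \<nu>2 * \<nu>2 (y / s)))"
    by (subst sum.swap) (intro sum.cong refl, rule sum.swap)
  also have "\<dots> = (\<Sum>s\<in>?U. - (\<psi> s * char_inv G s)
              * (\<Sum>\<nu>1\<in>chars. T1 \<nu>1 * \<nu>1 (x / s)) * (\<Sum>\<nu>2\<in>chars. T2 \<nu>2 * \<nu>2 (y / s)))"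
    by (intro sum.cong refl) (simp add: sum_distrib_left sum_distrib_right sum_negf mult_ac)
  finally show ?thesis .
qed

lemma sum_add_char_double:
  assumes "\<kappa> \<in> chars" "\<kappa> \<noteq> \<epsilon>"
  shows "(\<Sum>s\<in>UNIV - {0}. \<psi> s * \<kappa> s
            * (\<Sum>u\<in>UNIV - {0}. \<psi> (s * u) * f u) * (\<Sum>v\<in>UNIV - {0}. \<psi> (s * v) * h v))
       = - gauss \<psi> \<kappa> * (\<Sum>u\<in>UNIV - {0}. \<Sum>v\<in>UNIV - {0}. f u * h v * char_inv \<kappa> (1 + u + v))"
proof -
  let ?U = "UNIV - {0::'a}"
  have "(\<Sum>s\<in>?U. \<psi> s * \<kappa> s * (\<Sum>u\<in>?U. \<psi> (s * u) * f u) * (\<Sum>v\<in>?U. \<psi> (s * v) * h v))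
      = (\<Sum>s\<in>?U. \<Sum>u\<in>?U. \<Sum>v\<in>?U. f u * h v * (\<psi> ((1 + u + v) * s) * \<kappa> s))"
  proof (rule sum.cong[OF refl])
    fix s
    have "\<psi> ((1 + u + v) * s) = \<psi> s * \<psi> (s * u) * \<psi> (s * v)" for u v
      by (simp add: add_char_add[OF \<psi>, symmetric] algebra_simps)
    thus "\<psi> s * \<kappa> s * (\<Sum>u\<in>?U. \<psi> (s * u) * f u) * (\<Sum>v\<in>?U. \<psi> (s * v) * h v)
        = (\<Sum>u\<in>?U. \<Sum>v\<in>?U. f u * h v * (\<psi> ((1 + u + v) * s) * \<kappa> s))"
      by (simp add: sum_product sum_distrib_left mult_ac)
  qed
  also have "\<dots> = (\<Sum>u\<in>?U. \<Sum>v\<in>?U. f u * h v * (\<Sum>s\<in>?U. \<psi> ((1 + u + v) * s) * \<kappa> s))"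
    by (subst sum.swap) (rule sum.cong[OF refl], subst sum.swap, simp add: sum_distrib_left)
  also have "\<dots> = (\<Sum>u\<in>?U. \<Sum>v\<in>?U. f u * h v * (- char_inv \<kappa> (1 + u + v) * gauss \<psi> \<kappa>))"
    by (simp add: sum_add_char_twisted[OF \<psi> assms])
  finally show ?thesis by (simp add: sum_distrib_left sum_negf mult_ac)
qed

lemma F3_coeff_gauss:
  assumes ch: "A1 \<in> chars" "A2 \<in> chars" "B1 \<in> chars" "B2 \<in> chars" "G \<in> chars"
    and \<nu>: "\<nu>1 \<in> chars" "\<nu>2 \<in> chars"
  shows "poch \<psi> A1 \<nu>1 * poch \<psi> A2 \<nu>2 * poch \<psi> B1 \<nu>1 * poch \<psi> B2 \<nu>2
          / (poch0 \<psi> G (char_mult \<nu>1 \<nu>2) * poch0 \<psi> \<epsilon> \<nu>1 * poch0 \<psi> \<epsilon> \<nu>2)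
       = G (-1) * gauss0 \<psi> G / (of_nat CARD('a) * gauss \<psi> A1 * gauss \<psi> A2 * gauss \<psi> B1 * gauss \<psi> B2)
         * gauss_triple \<psi> A1 B1 \<nu>1 * gauss_triple \<psi> A2 B2 \<nu>2
         * gauss \<psi> (char_inv (char_mult G (char_mult \<nu>1 \<nu>2)))"
proof -
  define \<mu> where "\<mu> = char_mult G (char_mult \<nu>1 \<nu>2)"
  have \<mu>: "\<mu> \<in> chars" using ch \<nu> by (simp add: \<mu>_def)
  have sign: "G (-1) = \<mu> (-1) * \<nu>1 (-1) * \<nu>2 (-1)"
  proof -
    have "\<mu> (-1) * \<nu>1 (-1) * \<nu>2 (-1) = G (-1) * (\<nu>1 (-1) * \<nu>1 (-1)) * (\<nu>2 (-1) * \<nu>2 (-1))"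
      by (simp add: \<mu>_def char_mult_apply mult_ac)
    thus ?thesis by (simp add: chars_minus_one_square \<nu>)
  qed
  have "inverse (poch0 \<psi> G (char_mult \<nu>1 \<nu>2) * poch0 \<psi> \<epsilon> \<nu>1 * poch0 \<psi> \<epsilon> \<nu>2)
      = gauss0 \<psi> G * of_nat CARD('a) * of_nat CARD('a)
        * inverse (gauss0 \<psi> \<mu>) * inverse (gauss0 \<psi> \<nu>1) * inverse (gauss0 \<psi> \<nu>2)"
    by (simp add: poch0_def \<mu>_def char_mult_triv_left \<nu> gauss0_triv[OF \<psi>] inverse_mult_distrib divide_inverse
        mult_ac)
  also have "\<dots> = G (-1) * gauss0 \<psi> G / of_nat CARD('a)
      * gauss \<psi> (char_inv \<mu>) * gauss \<psi> (char_inv \<nu>1) * gauss \<psi> (char_inv \<nu>2)"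
    unfolding inverse_gauss0[OF \<psi> \<mu>] inverse_gauss0[OF \<psi> \<nu>(1)] inverse_gauss0[OF \<psi> \<nu>(2)] sign
    by (simp add: field_simps)
  finally have inv: "inverse (poch0 \<psi> G (char_mult \<nu>1 \<nu>2) * poch0 \<psi> \<epsilon> \<nu>1 * poch0 \<psi> \<epsilon> \<nu>2)
      = G (-1) * gauss0 \<psi> G / of_nat CARD('a)
        * gauss \<psi> (char_inv \<mu>) * gauss \<psi> (char_inv \<nu>1) * gauss \<psi> (char_inv \<nu>2)" .
  show ?thesis
    unfolding divide_inverse[where b = "_ * poch0 \<psi> \<epsilon> \<nu>2"] inv
    by (simp add: poch_def gauss_triple_def \<mu>_def divide_inverse inverse_mult_distrib mult_ac)
qed

lemma sum_chars2_gauss_triples: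
  assumes ch: "A1 \<in> chars" "A2 \<in> chars" "B1 \<in> chars" "B2 \<in> chars" "G \<in> chars"
    and A: "A1 \<noteq> \<epsilon>" "A2 \<noteq> \<epsilon>"
    and \<kappa>: "char_mult (char_mult B1 B2) (char_inv G) \<noteq> \<epsilon>"
    and xy: "x \<noteq> 0" "y \<noteq> 0"
  shows "(\<Sum>\<nu>1\<in>chars. \<Sum>\<nu>2\<in>chars. gauss_triple \<psi> A1 B1 \<nu>1 * gauss_triple \<psi> A2 B2 \<nu>2
            * gauss \<psi> (char_inv (char_mult G (char_mult \<nu>1 \<nu>2))) * \<nu>1 x * \<nu>2 y)
       = of_nat (CARD('a) - 1) ^ 2 * gauss \<psi> A1 * gauss \<psi> A2
         * gauss \<psi> (char_mult (char_mult B1 B2) (char_inv G)) * F3_euler_sum A1 A2 B1 B2 G x y"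
proof -
  let ?U = "UNIV - {0::'a}"
  define \<kappa>' where "\<kappa>' = char_mult (char_mult B1 B2) (char_inv G)"
  define N :: complex where "N = of_nat (CARD('a) - 1)"
  define f1 where "f1 u = B1 u * char_inv A1 (1 + u * x)" for u
  define f2 where "f2 v = B2 v * char_inv A2 (1 + v * y)" for v
  have "(\<Sum>\<nu>1\<in>chars. \<Sum>\<nu>2\<in>chars. gauss_triple \<psi> A1 B1 \<nu>1 * gauss_triple \<psi> A2 B2 \<nu>2
            * gauss \<psi> (char_inv (char_mult G (char_mult \<nu>1 \<nu>2))) * \<nu>1 x * \<nu>2 y)
      = (\<Sum>s\<in>?U. - (\<psi> s * char_inv G s)
           * (N * gauss \<psi> A1 * B1 s * (\<Sum>u\<in>?U. \<psi> (s * u) * f1 u))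
           * (N * gauss \<psi> A2 * B2 s * (\<Sum>v\<in>?U. \<psi> (s * v) * f2 v)))"
    unfolding sum_chars2_gauss_conj[OF ch(5)] N_def f1_def f2_def
    using ch A xy
    by (intro sum.cong refl) (simp add: sum_chars_gauss_triple_scaled mult.assoc)
  also have "\<dots> = (\<Sum>s\<in>?U. - (N\<^sup>2 * gauss \<psi> A1 * gauss \<psi> A2)
      * (\<psi> s * \<kappa>' s * (\<Sum>u\<in>?U. \<psi> (s * u) * f1 u) * (\<Sum>v\<in>?U. \<psi> (s * v) * f2 v)))"
    by (intro sum.cong refl) (simp add: \<kappa>'_def char_mult_apply power2_eq_square mult_ac)
  also have "\<dots> = - (N\<^sup>2 * gauss \<psi> A1 * gauss \<psi> A2)
      * (\<Sum>s\<in>?U. \<psi> s * \<kappa>' s * (\<Sum>u\<in>?U. \<psi> (s * u) * f1 u) * (\<Sum>v\<in>?U. \<psi> (s * v) * f2 v))"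
    by (rule sum_distrib_left[symmetric])
  also have "(\<Sum>s\<in>?U. \<psi> s * \<kappa>' s * (\<Sum>u\<in>?U. \<psi> (s * u) * f1 u) * (\<Sum>v\<in>?U. \<psi> (s * v) * f2 v))
      = - gauss \<psi> \<kappa>' * (\<Sum>u\<in>?U. \<Sum>v\<in>?U. f1 u * f2 v * char_inv \<kappa>' (1 + u + v))"
    using ch \<kappa> unfolding \<kappa>'_def by (intro sum_add_char_double) simp_all
  also have "(\<Sum>u\<in>?U. \<Sum>v\<in>?U. f1 u * f2 v * char_inv \<kappa>' (1 + u + v))
      = F3_euler_sum A1 A2 B1 B2 G x y"
    using ch unfolding F3_euler_sum_def F3_euler_term_def f1_def f2_def \<kappa>'_def
    by (simp add: sum_diff1 chars_zero sum.neutral mult_ac)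
  finally show ?thesis by (simp add: N_def \<kappa>'_def)
qed

lemma F3_eq_euler_sum:
  assumes ch: "A1 \<in> chars" "A2 \<in> chars" "B1 \<in> chars" "B2 \<in> chars" "G \<in> chars"
    and A: "A1 \<noteq> \<epsilon>" "A2 \<noteq> \<epsilon>"
    and \<kappa>: "char_mult (char_mult B1 B2) (char_inv G) \<noteq> \<epsilon>"
    and xy: "x \<noteq> 0" "y \<noteq> 0"
  shows "F3 \<psi> A1 A2 B1 B2 G x y = F3_euler_const \<psi> B1 B2 G * F3_euler_sum A1 A2 B1 B2 G x y"
proof -
  define K where "K = G (-1) * gauss0 \<psi> G
    / (of_nat CARD('a) * gauss \<psi> A1 * gauss \<psi> A2 * gauss \<psi> B1 * gauss \<psi> B2)"
  have q: "(1 - of_nat CARD('a) :: complex)\<^sup>2 = of_nat (CARD('a) - 1) ^ 2"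
    using card_field_ge_2[where 'a='a] by (simp add: of_nat_diff power2_commute)
  have "F3 \<psi> A1 A2 B1 B2 G x y = 1 / (1 - of_nat CARD('a))\<^sup>2 * (\<Sum>\<nu>1\<in>chars. \<Sum>\<nu>2\<in>chars. K *
      (gauss_triple \<psi> A1 B1 \<nu>1 * gauss_triple \<psi> A2 B2 \<nu>2
       * gauss \<psi> (char_inv (char_mult G (char_mult \<nu>1 \<nu>2))) * \<nu>1 x * \<nu>2 y))"
    unfolding F3_def
  proof (intro arg_cong[where f = "\<lambda>t. 1 / (1 - of_nat CARD('a))\<^sup>2 * t"] sum.cong refl)
    fix \<nu>1 \<nu>2 :: "'a \<Rightarrow> complex" assume "\<nu>1 \<in> chars" "\<nu>2 \<in> chars"
    thus "poch \<psi> A1 \<nu>1 * poch \<psi> A2 \<nu>2 * poch \<psi> B1 \<nu>1 * poch \<psi> B2 \<nu>2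
          / (poch0 \<psi> G (char_mult \<nu>1 \<nu>2) * poch0 \<psi> \<epsilon> \<nu>1 * poch0 \<psi> \<epsilon> \<nu>2) * \<nu>1 x * \<nu>2 y
        = K * (gauss_triple \<psi> A1 B1 \<nu>1 * gauss_triple \<psi> A2 B2 \<nu>2
               * gauss \<psi> (char_inv (char_mult G (char_mult \<nu>1 \<nu>2))) * \<nu>1 x * \<nu>2 y)"
      unfolding F3_coeff_gauss[OF ch \<open>\<nu>1 \<in> chars\<close> \<open>\<nu>2 \<in> chars\<close>] K_def by (simp only: mult.assoc)
  qed
  also have "\<dots> = K * gauss \<psi> A1 * gauss \<psi> A2 * gauss \<psi> (char_mult (char_mult B1 B2) (char_inv G))
      * F3_euler_sum A1 A2 B1 B2 G x y"
    using card_field_ge_2[where 'a='a]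
    by (simp add: sum_distrib_left[symmetric] sum_chars2_gauss_triples[OF ch A \<kappa> xy] q)
  also have "K * gauss \<psi> A1 * gauss \<psi> A2 = G (-1) * gauss0 \<psi> G / (of_nat CARD('a) * gauss \<psi> B1 * gauss \<psi> B2)"
    using gauss_nonzero[OF \<psi>] ch by (simp add: K_def field_simps)
  finally show ?thesis by (simp add: F3_euler_const_def)
qed

lemma F3_euler_const_reflect:
  assumes ch: "B1 \<in> chars" "B2 \<in> chars" "G \<in> chars"
    and B1: "B1 \<noteq> \<epsilon>" and \<kappa>: "char_mult (char_mult B1 B2) (char_inv G) \<noteq> \<epsilon>"
  shows "F3_euler_const \<psi> (char_inv (char_mult (char_mult B1 B2) (char_inv G))) B2 G * (B2 (-1) * G (-1))
       = F3_euler_const \<psi> B1 B2 G"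
proof -
  define \<kappa>' where "\<kappa>' = char_mult (char_mult B1 B2) (char_inv G)"
  have \<kappa>': "\<kappa>' \<in> chars" "\<kappa>' \<noteq> \<epsilon>" using ch \<kappa> by (simp_all add: \<kappa>'_def)
  have "\<kappa>' (-1) * B1 (-1) = B2 (-1) * G (-1) * (B1 (-1) * B1 (-1))"
    using ch by (simp add: \<kappa>'_def char_mult_apply char_inv_apply inverse_chars_minus_one mult_ac)
  hence sign: "\<kappa>' (-1) * B1 (-1) = B2 (-1) * G (-1)"
    by (simp add: chars_minus_one_square[OF ch(1)])
  have "F3_euler_const \<psi> B1 B2 G
      = G (-1) * gauss0 \<psi> G / (of_nat CARD('a) * gauss \<psi> B2) * (gauss \<psi> \<kappa>' / gauss \<psi> B1)"
    by (simp add: F3_euler_const_def \<kappa>'_def)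
  also have "\<dots> = G (-1) * gauss0 \<psi> G / (of_nat CARD('a) * gauss \<psi> B2)
      * (B2 (-1) * G (-1) * gauss \<psi> (char_inv B1) / gauss \<psi> (char_inv \<kappa>'))"
    by (simp only: gauss_divide_gauss_reflect[OF \<psi> \<kappa>'(1) ch(1) \<kappa>'(2) B1] sign)
  also have "\<dots> = F3_euler_const \<psi> (char_inv \<kappa>') B2 G * (B2 (-1) * G (-1))"
    unfolding F3_euler_const_def \<kappa>'_def char_mult_inv_mult_inv_cancel[OF ch]
    by (simp add: mult_ac)
  finally show ?thesis by (simp add: \<kappa>'_def)
qed

end

section \<open>The transformation\<close>

(* For fixed x and v an involution of {u. 1 + u x \<noteq> 0} (if 1 - x (1 + v) \<noteq> 0); at
   y = x / (x - 1) it carries the Euler sum of the right-hand side onto that of the left. *)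
definition euler_subst :: "'a::field \<Rightarrow> 'a \<Rightarrow> 'a \<Rightarrow> 'a" where
  "euler_subst x v u = - (1 + u + v) / (1 + u * x)"

lemma euler_subst_add:
  fixes x u v :: "'a::field"
  assumes "1 + u * x \<noteq> 0"
  shows "1 + euler_subst x v u + v = - (u * (1 - x * (1 + v)) / (1 + u * x))"
  using assms unfolding euler_subst_def by (simp add: field_simps; simp add: algebra_simps)

lemma euler_subst_mult:
  fixes x u v :: "'a::field"
  assumes "1 + u * x \<noteq> 0"
  shows "1 + euler_subst x v u * x = (1 - x * (1 + v)) / (1 + u * x)"
  using assms unfolding euler_subst_def by (simp add: field_simps; simp add: algebra_simps)

lemma euler_subst_involution:
  fixes x u v :: "'a::field"
  assumes p: "1 + u * x \<noteq> 0" and w: "1 - x * (1 + v) \<noteq> 0"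
  shows "euler_subst x v (euler_subst x v u) = u" "1 + euler_subst x v u * x \<noteq> 0"
proof -
  show "1 + euler_subst x v u * x \<noteq> 0" using euler_subst_mult[OF p] p w by simp
  have "euler_subst x v (euler_subst x v u) = - (1 + euler_subst x v u + v) / (1 + euler_subst x v u * x)"
    by (simp add: euler_subst_def)
  also have "\<dots> = u"
    unfolding euler_subst_add[OF p] euler_subst_mult[OF p] using p w by simp
  finally show "euler_subst x v (euler_subst x v u) = u" .
qed

lemma F3_euler_term_subst_generic:
  fixes x u v :: "'a::{field,finite}"
  assumes ch: "a1 \<in> chars" "a2 \<in> chars" "b1 \<in> chars" "b2 \<in> chars" "c \<in> chars"
    and x: "x \<noteq> 0" "x \<noteq> 1" and p: "1 + u * x \<noteq> 0" and w: "1 - x * (1 + v) \<noteq> 0"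
    and uv: "u \<noteq> 0" "1 + u + v \<noteq> 0" "v \<noteq> 0"
  shows "F3_euler_term (char_mult (char_inv (char_mult a1 a2)) c)
           (char_mult (char_mult (char_mult (char_mult a1 a2) b1) b2) (char_inv c))
           (char_mult (char_inv (char_mult a2 b1)) c) a2 c x (x / (x - 1)) (euler_subst x v u) v
       = a2 (-1) * c (-1) * char_mult (char_mult (char_mult a1 a2) b1) (char_inv c) (1 - x)
         * F3_euler_term a1 b2 b1 a2 c x (x / (x - 1)) u v"
proof -
  define t where "t = 1 + u + v"
  define p' where "p' = 1 + u * x"
  define w' where "w' = 1 - x * (1 + v)"
  define d where "d = 1 - x"
  have nz: "t \<noteq> 0" "p' \<noteq> 0" "w' \<noteq> 0" "d \<noteq> 0"
    using uv x p w by (simp_all add: t_def p'_def w'_def d_def)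
  have e1: "euler_subst x v u = (-1) * (t / p')"
    by (simp add: euler_subst_def t_def p'_def)
  have e2: "1 + euler_subst x v u + v = (-1) * (u * w' / p')"
    using euler_subst_add[OF p] by (simp add: p'_def w'_def)
  have e3: "1 + euler_subst x v u * x = w' / p'"
    using euler_subst_mult[OF p] by (simp add: p'_def w'_def)
  have e4: "1 + v * (x / (x - 1)) = w' / d"
    using x unfolding w'_def d_def by (simp add: field_simps; simp add: algebra_simps)
  show ?thesis
    unfolding F3_euler_term_def e2 e3 e4
    unfolding e1 t_def[symmetric] p'_def[symmetric] d_def[symmetric]
    using chars_minus_one_cases[OF ch(2)] chars_minus_one_cases[OF ch(3)]
      chars_minus_one_cases[OF ch(5)]
    apply (simp only: char_inv_apply char_mult_in_chars char_inv_in_chars ch char_mult_apply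
        chars_mult[OF ch(1)] chars_mult[OF ch(2)] chars_mult[OF ch(3)] chars_mult[OF ch(4)]
        chars_mult[OF ch(5)] chars_divide[OF ch(1)] chars_divide[OF ch(2)]
        chars_divide[OF ch(3)] chars_divide[OF ch(4)] chars_divide[OF ch(5)])
    apply (elim disjE)
    apply (simp_all add: chars_eq_0_iff ch nz uv field_simps)
    done
qed

lemma F3_euler_term_subst:
  fixes x u v :: "'a::{field,finite}"
  assumes ch: "a1 \<in> chars" "a2 \<in> chars" "b1 \<in> chars" "b2 \<in> chars" "c \<in> chars"
    and x: "x \<noteq> 0" "x \<noteq> 1" and p: "1 + u * x \<noteq> 0" and w: "1 - x * (1 + v) \<noteq> 0"
  shows "F3_euler_term (char_mult (char_inv (char_mult a1 a2)) c)
           (char_mult (char_mult (char_mult (char_mult a1 a2) b1) b2) (char_inv c))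
           (char_mult (char_inv (char_mult a2 b1)) c) a2 c x (x / (x - 1)) (euler_subst x v u) v
       = a2 (-1) * c (-1) * char_mult (char_mult (char_mult a1 a2) b1) (char_inv c) (1 - x)
         * F3_euler_term a1 b2 b1 a2 c x (x / (x - 1)) u v"
proof -
  consider "u = 0" | "1 + u + v = 0" | "v = 0" | "u \<noteq> 0" "1 + u + v \<noteq> 0" "v \<noteq> 0" by blast
  thus ?thesis
  proof cases
    case 1
    hence "1 + euler_subst x v u + v = 0" by (simp add: euler_subst_def)
    thus ?thesis using 1 ch by (simp add: F3_euler_term_def char_inv_def chars_zero)
  next
    case 2
    hence "euler_subst x v u = 0" by (simp add: euler_subst_def)
    thus ?thesis using 2 ch by (simp add: F3_euler_term_def char_inv_def char_mult_apply chars_zero)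
  next
    case 3
    thus ?thesis using ch by (simp add: F3_euler_term_def chars_zero)
  next
    case 4
    thus ?thesis by (rule F3_euler_term_subst_generic[OF ch x p w])
  qed
qed

lemma F3_euler_sum_transform:
  fixes x :: "'a::{field,finite}"
  assumes ch: "a1 \<in> chars" "a2 \<in> chars" "b1 \<in> chars" "b2 \<in> chars" "c \<in> chars"
    and x: "x \<noteq> 0" "x \<noteq> 1"
  shows "F3_euler_sum (char_mult (char_inv (char_mult a1 a2)) c)
           (char_mult (char_mult (char_mult (char_mult a1 a2) b1) b2) (char_inv c))
           (char_mult (char_inv (char_mult a2 b1)) c) a2 c x (x / (x - 1))
       = a2 (-1) * c (-1) * char_mult (char_mult (char_mult a1 a2) b1) (char_inv c) (1 - x)
         * F3_euler_sum a1 b2 b1 a2 c x (x / (x - 1))"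
proof -
  let ?R = "F3_euler_term (char_mult (char_inv (char_mult a1 a2)) c)
    (char_mult (char_mult (char_mult (char_mult a1 a2) b1) b2) (char_inv c))
    (char_mult (char_inv (char_mult a2 b1)) c) a2 c x (x / (x - 1))"
  let ?L = "F3_euler_term a1 b2 b1 a2 c x (x / (x - 1))"
  let ?k = "a2 (-1) * c (-1) * char_mult (char_mult (char_mult a1 a2) b1) (char_inv c) (1 - x)"
  have inner: "(\<Sum>u\<in>UNIV. ?R u v) = ?k * (\<Sum>u\<in>UNIV. ?L u v)" for v
  proof (cases "1 - x * (1 + v) = 0")
    case True
    have "1 + v * (x / (x - 1)) = - (1 - x * (1 + v)) / (x - 1)"
      using x by (simp add: field_simps; simp add: algebra_simps)
    thus ?thesis using True by (simp add: F3_euler_term_def char_inv_def)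
  next
    case False
    define T where "T = {u. 1 + u * x \<noteq> 0}"
    have "(\<Sum>u\<in>UNIV. ?R u v) = (\<Sum>u\<in>T. ?R u v)"
      by (rule sum.mono_neutral_right) (auto simp: T_def F3_euler_term_def char_inv_def)
    also have "\<dots> = (\<Sum>u\<in>T. ?R (euler_subst x v u) v)"
      by (rule sum.reindex_bij_witness[of _ "euler_subst x v" "euler_subst x v"])
         (auto simp: T_def euler_subst_involution[OF _ False])
    also have "\<dots> = (\<Sum>u\<in>T. ?k * ?L u v)"
      by (intro sum.cong refl) (simp add: T_def F3_euler_term_subst[OF ch x _ False])
    also have "\<dots> = ?k * (\<Sum>u\<in>UNIV. ?L u v)"
      unfolding sum_distrib_left[symmetric]
      by (intro arg_cong[where f = "\<lambda>t. ?k * t"] sum.mono_neutral_left)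
         (auto simp: T_def F3_euler_term_def char_inv_def)
    finally show ?thesis .
  qed
  show ?thesis
    unfolding F3_euler_sum_def by (subst (1 2) sum.swap) (simp add: inner sum_distrib_left)
qed

lemma F3_transform:
  fixes x :: "'a::{field,finite}"
  assumes \<psi>: "nontriv_add_char \<psi>"
    and ch: "a1 \<in> chars" "a2 \<in> chars" "b1 \<in> chars" "b2 \<in> chars" "c \<in> chars"
    and triv: "a1 \<noteq> \<epsilon>" "b1 \<noteq> \<epsilon>" "b2 \<noteq> \<epsilon>"
    and c: "c \<noteq> char_mult a1 a2" "c \<noteq> char_mult a2 b1"
      "c \<noteq> char_mult (char_mult (char_mult a1 a2) b1) b2"
    and x: "x \<noteq> 0" "x \<noteq> 1"
  shows "char_mult (char_mult (char_mult a1 a2) b1) (char_inv c) (1 - x)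
           * F3 \<psi> a1 a2 b1 b2 c x (x / (x - 1))
         = F3 \<psi> (char_mult (char_inv (char_mult a2 b1)) c)
                (char_mult (char_mult (char_mult (char_mult a1 a2) b1) b2) (char_inv c))
                (char_mult (char_inv (char_mult a1 a2)) c) a2 c x (x / (x - 1))"
proof -
  define \<kappa> where "\<kappa> = char_mult (char_mult b1 a2) (char_inv c)"
  define a1' where "a1' = char_mult (char_inv (char_mult a2 b1)) c"
  define a2' where "a2' = char_mult (char_mult (char_mult (char_mult a1 a2) b1) b2) (char_inv c)"
  define b1' where "b1' = char_mult (char_inv (char_mult a1 a2)) c"
  have y: "x / (x - 1) \<noteq> 0" using x by simp
  have a1': "a1' = char_inv \<kappa>"
    using ch by (intro chars_eqI) (simp_all add: a1'_def \<kappa>_def char_mult_apply char_inv_apply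
        chars_eq_0_iff field_simps)
  have "char_mult (char_mult a1' a2) (char_inv c) = char_inv b1"
    unfolding a1' \<kappa>_def by (rule char_mult_inv_mult_inv_cancel[OF ch(3) ch(2) ch(5)])
  hence nontriv: "\<kappa> \<noteq> \<epsilon>" "b1' \<noteq> \<epsilon>" "a2' \<noteq> \<epsilon>" "char_mult (char_mult a1' a2) (char_inv c) \<noteq> \<epsilon>"
    using c triv ch
    by (auto simp: \<kappa>_def b1'_def a2'_def char_mult_inv_eq_triv_iff char_mult_commute[of b1]
        char_mult_commute[of "char_inv _" c] char_inv_eq_triv_iff)
  have "F3 \<psi> a1 a2 b1 b2 c x (x / (x - 1))
      = F3_euler_const \<psi> b1 a2 c * F3_euler_sum a1 b2 b1 a2 c x (x / (x - 1))"
    using ch triv nontriv(1) x y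
    by (subst F3_swap_a2_b2) (intro F3_eq_euler_sum[OF \<psi>]; simp add: \<kappa>_def)
  moreover have "F3 \<psi> a1' a2' b1' a2 c x (x / (x - 1))
      = F3_euler_const \<psi> a1' a2 c * F3_euler_sum b1' a2' a1' a2 c x (x / (x - 1))"
    using ch nontriv(2-4) x y
    by (subst F3_swap_a1_b1) (intro F3_eq_euler_sum[OF \<psi>]; simp add: a1'_def a2'_def b1'_def)
  moreover have "F3_euler_const \<psi> a1' a2 c * (a2 (-1) * c (-1)) = F3_euler_const \<psi> b1 a2 c"
    using ch triv nontriv(1)
    unfolding a1' \<kappa>_def by (intro F3_euler_const_reflect[OF \<psi>]) simp_all
  ultimately show ?thesis
    using F3_euler_sum_transform[OF ch x]
    by (simp add: a1'_def a2'_def b1'_def mult_ac)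
qed

theorem corollary3p15:
  fixes \<psi> :: "'a::{field,finite} \<Rightarrow> complex"
    and a1 a2 b1 b2 c :: "'a \<Rightarrow> complex"
    and l :: 'a
  assumes "nontriv_add_char \<psi>"
    and "a1 \<in> chars" "a2 \<in> chars" "b1 \<in> chars" "b2 \<in> chars" "c \<in> chars"
    and "c \<notin> {char_mult a1 a2, char_mult b1 b2, char_mult a1 b2, char_mult a2 b1,
               char_mult (char_mult (char_mult a1 a2) b1) b2}"
    and "\<epsilon> \<notin> {a1, a2, b1, b2}"
    and "l \<noteq> 1"
  shows "char_mult (char_mult (char_mult a1 a2) b1) (char_inv c) (1 - l)
           * F3 \<psi> a1 a2 b1 b2 c l (l / (l - 1))
         = F3 \<psi> (char_mult (char_inv (char_mult a2 b1)) c)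
                (char_mult (char_mult (char_mult (char_mult a1 a2) b1) b2) (char_inv c))
                (char_mult (char_inv (char_mult a1 a2)) c) a2 c l (l / (l - 1))"
proof (cases "l = 0")
  case True
  thus ?thesis by (simp add: F3_zero_left)
next
  case False
  thus ?thesis using assms by (intro F3_transform) auto
qed

end
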